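(* Let $U\in\mathcal U_n$ and let $U'\in\mathcal U_{n+1}$ be obtained from $U$ by adding an $(n+1)$-st unit interval $I_{n+1}$ to the right of the intervals of $U$. Then the Dyck path $p(U')$ is obtained from $p(U)$ by adding a final maximal peak.
   Context: A unit interval order on $\{1,\dots,n\}$ is given by closed intervals $I_1,\dots,I_n$ of length $1$ in $\mathbb R$, numbered from left to right, with $i\prec j$ iff $I_i$ lies strictly to the left of $I_j$; $\mathcal U_n$ is the set of these. "Adding an interval to the right" means $I_{n+1}$ is a unit interval placed so that $I_1,\dots,I_{n+1}$ are still numbered from left to right. A Dyck path of length $n$ is a lattice path from $(0,0)$ to $(n,n)$ with up steps $a$ and right steps $b$ never going below $y=x$; its area sequence lists row by row from bottom to top the number of unit boxes between path and diagonal. For a nonnegative integer sequence $w=(w_1,\dots,w_n)$, $P(w)$ is the poset on $\{1,\dots,n\}$ with $i\prec j$ iff $w_j-w_i\ge2$, or $w_j-w_i=1$ and $i<j$. For each $U\in\mathcal U_n$ there is a unique $w$ that is the area sequence of a Dyck path with $P(w)$ isomorphic to $U$; $p(U)$ is the Dyck path with this area sequence. A peak is an up step immediately followed by a right step (a factor $ab$); adding a peak means inserting the factor $ab$ somewhere into the word of the path. A peak is maximal if the top of its up step lies on the highest line of slope $1$ touching the path; the final maximal peak is the last maximal peak of the path. "Adding a final maximal peak" means the inserted peak is the final maximal peak of the resulting path. *)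

theory Defs
  imports Complex_Main
begin

(* Steps of a lattice path: A = up step a, B = right step b *)
datatype step = A | B

definition cntA :: "step list \<Rightarrow> nat" where
  "cntA w = length (filter (\<lambda>s. s = A) w)"

definition cntB :: "step list \<Rightarrow> nat" where
  "cntB w = length (filter (\<lambda>s. s = B) w)"

definition dyck :: "nat \<Rightarrow> step list \<Rightarrow> bool" where
  "dyck n d \<longleftrightarrow> cntA d = n \<and> cntB d = n \<and>
     (\<forall>k \<le> length d. cntB (take k d) \<le> cntA (take k d))"

(* area sequence: the i-th up step (row i) starts at x = number of right steps before it,
   row i contributes (i-1) - x boxes between path and diagonal *)
fun area_from :: "nat \<Rightarrow> nat \<Rightarrow> step list \<Rightarrow> nat list" where
  "area_from u r [] = []"
| "area_from u r (A # w) = (u - r) # area_from (Suc u) r w"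
| "area_from u r (B # w) = area_from u (Suc r) w"

definition area :: "step list \<Rightarrow> nat list" where
  "area d = area_from 0 0 d"

definition Pw :: "nat list \<Rightarrow> nat \<Rightarrow> nat \<Rightarrow> bool" where
  "Pw w i j \<longleftrightarrow> i \<in> {1..length w} \<and> j \<in> {1..length w} \<and>
     (int (w ! (j - 1)) - int (w ! (i - 1)) \<ge> 2 \<or>
      (int (w ! (j - 1)) - int (w ! (i - 1)) = 1 \<and> i < j))"

(* the unit interval order on {1..n} given by unit intervals [x i, x i + 1] *)
definition uio :: "(nat \<Rightarrow> real) \<Rightarrow> nat \<Rightarrow> nat \<Rightarrow> nat \<Rightarrow> bool" where
  "uio x n i j \<longleftrightarrow> i \<in> {1..n} \<and> j \<in> {1..n} \<and> x i + 1 < x j"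

definition iso_on :: "nat \<Rightarrow> (nat \<Rightarrow> nat \<Rightarrow> bool) \<Rightarrow> (nat \<Rightarrow> nat \<Rightarrow> bool) \<Rightarrow> bool" where
  "iso_on n R S \<longleftrightarrow> (\<exists>f. bij_betw f {1..n} {1..n} \<and>
     (\<forall>i\<in>{1..n}. \<forall>j\<in>{1..n}. R i j \<longleftrightarrow> S (f i) (f j)))"

definition pU :: "nat \<Rightarrow> (nat \<Rightarrow> nat \<Rightarrow> bool) \<Rightarrow> step list" where
  "pU n U = (THE d. dyck n d \<and> iso_on n (Pw (area d)) U)"

definition diag_level :: "step list \<Rightarrow> nat \<Rightarrow> int" where
  "diag_level d k = int (cntA (take k d)) - int (cntB (take k d))"

(* the highest line of slope 1 touching the path: y - x = max_level *)
definition max_level :: "step list \<Rightarrow> int" where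
  "max_level d = Max (diag_level d ` {0..length d})"

definition is_peak :: "step list \<Rightarrow> nat \<Rightarrow> bool" where
  "is_peak d k \<longleftrightarrow> Suc k < length d \<and> d ! k = A \<and> d ! Suc k = B"

(* maximal peak: top of its up step (point after k+1 steps) lies on the highest line *)
definition is_max_peak :: "step list \<Rightarrow> nat \<Rightarrow> bool" where
  "is_max_peak d k \<longleftrightarrow> is_peak d k \<and> diag_level d (Suc k) = max_level d"

definition is_final_max_peak :: "step list \<Rightarrow> nat \<Rightarrow> bool" where
  "is_final_max_peak d k \<longleftrightarrow> is_max_peak d k \<and> (\<forall>k'. is_max_peak d k' \<longrightarrow> k' \<le> k)"

definition add_final_max_peak :: "step list \<Rightarrow> step list \<Rightarrow> bool" where
  "add_final_max_peak d d' \<longleftrightarrow>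
     (\<exists>u v. d = u @ v \<and> d' = u @ [A, B] @ v \<and> is_final_max_peak d' (length u))"

end

theory Submission
  imports Defs "HOL-Library.Multiset" "HOL-Library.Product_Lexorder"
begin

text \<open>Inserting a peak at a point of level \<open>h\<close> preceded by \<open>k\<close> up steps inserts the entry
  \<open>h\<close> at position \<open>k\<close> into the area sequence, and the new peak is the final maximal one exactly
  when \<open>h\<close> bounds all entries, strictly from position \<open>k\<close> on. The new element of the poset then
  gets an explicit down-degree \<open>F(k, h)\<close> while all other down-degrees are unchanged, and as
  \<open>(k, h)\<close> runs through the admissible slots, \<open>F(k, h)\<close> takes every value between the largest
  old down-degree and \<open>n\<close> exactly once.

  Unit interval orders and the posets \<open>P(w)\<close> are nested relations, which are determined up to
  isomorphism by their multisets of down-degrees. The interval \<open>I\<^sub>n\<^sub>+\<^sub>1\<close> adds an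
  element whose down-degree lies in that range, so the matching final maximal peak inserted into
  \<open>p(U)\<close> gives a path for \<open>U'\<close>. Conversely, removing final maximal peaks shows by induction
  that a Dyck path is determined by the down-degrees of its poset, so this path is \<open>p(U')\<close>.\<close>

section \<open>Steps, levels and area sequences\<close>

lemma cntA_simps [simp]:
  "cntA [] = 0" "cntA (A # w) = Suc (cntA w)" "cntA (B # w) = cntA w"
  "cntA (xs @ ys) = cntA xs + cntA ys"
  by (auto simp: cntA_def)

lemma cntB_simps [simp]:
  "cntB [] = 0" "cntB (B # w) = Suc (cntB w)" "cntB (A # w) = cntB w"
  "cntB (xs @ ys) = cntB xs + cntB ys"
  by (auto simp: cntB_def)

lemma length_eq_cntA_add_cntB: "length w = cntA w + cntB w"
proof (induction w)
  case (Cons s w)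
  then show ?case by (cases s) simp_all
qed simp

lemma cntA_take_mono: "p \<le> q \<Longrightarrow> cntA (take p w) \<le> cntA (take q w)"
  by (metis cntA_simps(4) le_add1 le_add_diff_inverse take_add)

lemma length_area_from [simp]: "length (area_from u r w) = cntA w"
  by (induction u r w rule: area_from.induct) auto

lemma area_from_Suc_Suc: "area_from (Suc u) (Suc r) w = area_from u r w"
proof (induction w arbitrary: u r)
  case (Cons s w)
  then show ?case by (cases s) simp_all
qed simp

lemma area_from_append:
  "area_from u r (xs @ ys) = area_from u r xs @ area_from (u + cntA xs) (r + cntB xs) ys"
  by (induction u r xs rule: area_from.induct) auto

lemma area_from_hd_le: "area_from u r e \<noteq> [] \<Longrightarrow> area_from u r e ! 0 \<le> u - r"
  by (induction u r e rule: area_from.induct) force+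

lemma area_from_Suc_nth_le:
  "Suc j < length (area_from u r e) \<Longrightarrow> area_from u r e ! Suc j \<le> area_from u r e ! j + 1"
proof (induction u r e arbitrary: j rule: area_from.induct)
  case (2 u r w)
  show ?case
  proof (cases j)
    case 0
    with "2.prems" have "area_from (Suc u) r w \<noteq> []" by (auto simp flip: length_0_conv)
    then have "area_from (Suc u) r w ! 0 \<le> Suc u - r" by (rule area_from_hd_le)
    with 0 show ?thesis by simp
  next
    case (Suc j')
    with 2 show ?thesis by simp
  qed
qed simp_all

lemma area_from_nth_cntA_take:
  "pos < length e \<Longrightarrow> e ! pos = A \<Longrightarrow>
    area_from u r e ! cntA (take pos e) = (u + cntA (take pos e)) - (r + cntB (take pos e))
    \<and> cntA (take pos e) < cntA e"
proof (induction e arbitrary: u r pos)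
  case (Cons s e)
  then show ?case using Cons.IH[of "pos - 1"] by (cases pos; cases s) auto
qed simp

lemma ex_up_step_at_row: "j < cntA e \<Longrightarrow> \<exists>pos<length e. e ! pos = A \<and> cntA (take pos e) = j"
proof (induction e arbitrary: j)
  case (Cons s e)
  show ?case
  proof (cases "s = A \<and> j = 0")
    case True
    then show ?thesis by (intro exI[of _ 0]) auto
  next
    case False
    have "(if s = A then j - 1 else j) < cntA e" using Cons.prems False by (cases s) auto
    then obtain pos where "pos < length e" "e ! pos = A"
      "cntA (take pos e) = (if s = A then j - 1 else j)"
      using Cons.IH by blast
    with False show ?thesis by (intro exI[of _ "Suc pos"]) (cases s; auto)
  qed
qed simp

lemma diag_level_0 [simp]: "diag_level d 0 = 0"
  by (simp add: diag_level_def)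

lemma diag_level_Suc:
  "q < length d \<Longrightarrow> diag_level d (Suc q) = diag_level d q + (if d ! q = A then 1 else -1)"
  by (cases "d ! q") (auto simp: diag_level_def take_Suc_conv_app_nth)

lemma dyck_iff_diag_level_nonneg:
  "dyck n d \<longleftrightarrow> cntA d = n \<and> cntB d = n \<and> (\<forall>k\<le>length d. diag_level d k \<ge> 0)"
  by (auto simp: dyck_def diag_level_def)

lemma dyck_diag_level_nonneg: "dyck n d \<Longrightarrow> q \<le> length d \<Longrightarrow> diag_level d q \<ge> 0"
  by (simp add: dyck_iff_diag_level_nonneg)

lemma length_dyck: "dyck n d \<Longrightarrow> length d = 2 * n"
  by (simp add: dyck_def length_eq_cntA_add_cntB)

lemma length_area_dyck: "dyck n d \<Longrightarrow> length (area d) = n"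
  by (simp add: area_def dyck_def)

lemma nat_diag_level: "nat (diag_level d q) = cntA (take q d) - cntB (take q d)"
  by (simp add: diag_level_def)

lemma area_nth_up_step:
  assumes "dyck n e" "pos < length e" "e ! pos = A"
  shows "area e ! cntA (take pos e) = nat (diag_level e pos)" and "cntA (take pos e) < n"
  using area_from_nth_cntA_take[OF assms(2,3), of 0 0] assms(1)
  by (auto simp: area_def dyck_def nat_diag_level)

lemma ex_up_step_at_area_row:
  assumes "dyck n d" "j < n"
  obtains pos where "pos < length d" "d ! pos = A" "cntA (take pos d) = j"
    "area d ! j = nat (diag_level d pos)"
proof -
  obtain pos where "pos < length d" "d ! pos = A" "cntA (take pos d) = j"
    using ex_up_step_at_row[of j d] assms by (auto simp: dyck_def)
  with area_nth_up_step[OF assms(1), of pos] that show ?thesis by auto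
qed

lemma area_dyck_0: "dyck n d \<Longrightarrow> 0 < n \<Longrightarrow> area d ! 0 = 0"
  using area_from_hd_le[of 0 0 d] by (auto simp: area_def dyck_def simp flip: length_0_conv)

lemma area_dyck_Suc_nth_le: "dyck n d \<Longrightarrow> Suc j < n \<Longrightarrow> area d ! Suc j \<le> area d ! j + 1"
  using area_from_Suc_nth_le[of j 0 0 d] by (simp add: area_def dyck_def)

lemma diag_level_le_Suc_bound_area:
  assumes "\<forall>v\<in>set (area d). v \<le> b" "q \<le> length d"
  shows "diag_level d q \<le> 1 + int b"
  using assms(2)
proof (induction q)
  case (Suc q)
  then have q: "q < length d" by simp
  show ?case
  proof (cases "d ! q")
    case A
    have "area d ! cntA (take q d) = nat (diag_level d q)" "cntA (take q d) < cntA d"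
      using area_from_nth_cntA_take[OF q A, of 0 0] by (simp_all add: area_def nat_diag_level)
    with assms(1) have "nat (diag_level d q) \<le> b" by (metis area_def length_area_from nth_mem)
    then show ?thesis using diag_level_Suc[OF q] A by simp
  next
    case B
    then show ?thesis using diag_level_Suc[OF q] Suc by simp
  qed
qed simp

lemma diag_level_le_max_level: "q \<le> length d \<Longrightarrow> diag_level d q \<le> max_level d"
  unfolding max_level_def by (rule Max_ge) auto

lemma max_level_eqI:
  assumes "\<forall>q\<le>length d. diag_level d q \<le> L" "q0 \<le> length d" "diag_level d q0 = L"
  shows "max_level d = L"
  unfolding max_level_def by (rule Max_eqI) (use assms in auto)

definition dyck_suffix :: "nat \<Rightarrow> nat \<Rightarrow> step list \<Rightarrow> bool" where
  "dyck_suffix u r d \<longleftrightarrow>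
     (\<forall>q\<le>length d. r + cntB (take q d) \<le> u + cntA (take q d)) \<and> r + cntB d = u + cntA d"

lemma dyck_suffix_Cons_A:
  assumes "dyck_suffix u r (A # d)"
  shows "dyck_suffix (Suc u) r d"
proof -
  have "r + cntB (take q d) \<le> Suc u + cntA (take q d)" if "q \<le> length d" for q
    using assms[unfolded dyck_suffix_def, THEN conjunct1, rule_format, of "Suc q"] that by simp
  with assms show ?thesis by (simp add: dyck_suffix_def)
qed

lemma dyck_suffix_Cons_B:
  assumes "dyck_suffix u r (B # d)"
  shows "dyck_suffix u (Suc r) d" and "Suc r \<le> u"
proof -
  have "Suc r + cntB (take q d) \<le> u + cntA (take q d)" if "q \<le> length d" for q
    using assms[unfolded dyck_suffix_def, THEN conjunct1, rule_format, of "Suc q"] that by simp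
  with assms show "dyck_suffix u (Suc r) d" by (simp add: dyck_suffix_def)
  show "Suc r \<le> u" using assms[unfolded dyck_suffix_def, THEN conjunct1, rule_format, of 1] by simp
qed

lemma dyck_suffix_without_up_steps: "cntA d = 0 \<Longrightarrow> dyck_suffix u u d \<Longrightarrow> d = []"
  by (metis add_0 add_left_imp_eq dyck_suffix_def length_0_conv length_eq_cntA_add_cntB)

text \<open>An up step contributes the entry \<open>u - r\<close>, which a right step followed by anything
  can no longer produce as its first entry.\<close>

lemma area_from_inj:
  "area_from u r d1 = area_from u r d2 \<Longrightarrow> dyck_suffix u r d1 \<Longrightarrow> dyck_suffix u r d2 \<Longrightarrow> d1 = d2"
proof (induction d1 arbitrary: d2 u r)
  case Nil
  then show ?case using dyck_suffix_without_up_steps[of d2 u]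
    by (simp add: dyck_suffix_def) (metis length_area_from list.size(3))
next
  case (Cons a d1)
  show ?case
  proof (cases d2)
    case Nil
    then have "cntA (a # d1) = 0" "r = u" using Cons.prems
      by (metis area_from.simps(1) length_area_from list.size(3), simp add: dyck_suffix_def)
    then show ?thesis using Cons.prems dyck_suffix_without_up_steps[of "a # d1" u] by simp
  next
    case (Cons b d2')
    have first_up_right: False
      if "(u - r) # area_from (Suc u) r d = area_from u (Suc r) d'" "dyck_suffix u r (B # d')"
      for d d'
    proof -
      have ru: "Suc r \<le> u" using dyck_suffix_Cons_B(2)[OF that(2)] .
      have "area_from u (Suc r) d' \<noteq> []" using that(1) by (metis list.distinct(1))
      then have "area_from u (Suc r) d' ! 0 \<le> u - Suc r" by (rule area_from_hd_le)
      with that(1)[symmetric] ru show False by simp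
    qed
    show ?thesis
    proof (cases a; cases b)
      assume "a = A" "b = A"
      with Cons Cons.prems Cons.IH[of "Suc u" r d2'] dyck_suffix_Cons_A show ?thesis by simp
    next
      assume "a = B" "b = B"
      with Cons Cons.prems Cons.IH[of u "Suc r" d2'] dyck_suffix_Cons_B show ?thesis by simp
    next
      assume "a = A" "b = B"
      with Cons Cons.prems first_up_right[of d1 d2'] show ?thesis by simp
    next
      assume "a = B" "b = A"
      with Cons Cons.prems first_up_right[of d2' d1] show ?thesis by simp
    qed
  qed
qed

lemma dyck_eq_if_area_eq: "dyck n d1 \<Longrightarrow> dyck m d2 \<Longrightarrow> area d1 = area d2 \<Longrightarrow> d1 = d2"
  by (rule area_from_inj[of 0 0]) (auto simp: area_def dyck_suffix_def dyck_def)

section \<open>Inserting a peak\<close>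

definition insert_peak :: "nat \<Rightarrow> step list \<Rightarrow> step list" where
  "insert_peak p e = take p e @ [A, B] @ drop p e"

definition insert_at :: "nat \<Rightarrow> 'a \<Rightarrow> 'a list \<Rightarrow> 'a list" where
  "insert_at k h w = take k w @ h # drop k w"

lemma length_insert_at [simp]: "k \<le> length w \<Longrightarrow> length (insert_at k h w) = Suc (length w)"
  by (simp add: insert_at_def)

lemma nth_insert_at_eq [simp]: "k \<le> length w \<Longrightarrow> insert_at k h w ! k = h"
  by (simp add: insert_at_def nth_append)

lemma nth_insert_at_less: "j < k \<Longrightarrow> k \<le> length w \<Longrightarrow> insert_at k h w ! j = w ! j"
  by (simp add: insert_at_def nth_append)

lemma nth_insert_at_greater: "k < j \<Longrightarrow> k \<le> length w \<Longrightarrow> insert_at k h w ! j = w ! (j - 1)"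
  by (simp add: insert_at_def nth_append nth_Cons')

lemma length_insert_peak [simp]: "p \<le> length e \<Longrightarrow> length (insert_peak p e) = Suc (Suc (length e))"
  by (simp add: insert_peak_def)

lemma cnt_insert_peak [simp]:
  "cntA (insert_peak p e) = Suc (cntA e)" "cntB (insert_peak p e) = Suc (cntB e)"
  using cntA_simps(4)[of "take p e" "drop p e"] cntB_simps(4)[of "take p e" "drop p e"]
  by (simp_all add: insert_peak_def)

lemma is_peak_insert_peak: "p \<le> length e \<Longrightarrow> is_peak (insert_peak p e) p"
  by (simp add: is_peak_def insert_peak_def nth_append)

lemma cntA_take_insert_peak:
  "p \<le> length e \<Longrightarrow> cntA (take (Suc (Suc p)) (insert_peak p e)) = Suc (cntA (take p e))"
  by (simp add: insert_peak_def take_append)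

lemma area_insert_peak:
  "area (insert_peak p e) = insert_at (cntA (take p e)) (nat (diag_level e p)) (area e)"
proof -
  let ?k = "cntA (take p e)" and ?b = "cntB (take p e)"
  have e: "area e = area_from 0 0 (take p e) @ area_from ?k ?b (drop p e)"
    unfolding area_def by (metis append_take_drop_id area_from_append add_0)
  have "area (insert_peak p e) =
      area_from 0 0 (take p e) @ (?k - ?b) # area_from (Suc ?k) (Suc ?b) (drop p e)"
    by (simp add: area_def insert_peak_def area_from_append)
  also have "\<dots> = area_from 0 0 (take p e) @ (?k - ?b) # area_from ?k ?b (drop p e)"
    by (simp add: area_from_Suc_Suc)
  finally show ?thesis using e by (simp add: insert_at_def nat_diag_level)
qed

lemma diag_level_insert_peak:
  assumes "p \<le> length e"
  shows "diag_level (insert_peak p e) q =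
    (if q \<le> p then diag_level e q
     else if q = Suc p then diag_level e p + 1
     else diag_level e (q - 2))"
proof -
  let ?d = "insert_peak p e"
  have lp: "length (take p e) = p" using assms by simp
  consider "q \<le> p" | "q = Suc p" | "Suc (Suc p) \<le> q" by linarith
  then show ?thesis
  proof cases
    case 1
    then have "take q ?d = take q e" using lp by (simp add: insert_peak_def take_append min_def)
    with 1 show ?thesis by (simp add: diag_level_def)
  next
    case 2
    then have "take q ?d = take p e @ [A]" using lp by (simp add: insert_peak_def take_append)
    with 2 show ?thesis by (simp add: diag_level_def)
  next
    case 3
    then obtain m where m: "q = Suc (Suc p) + m" using le_Suc_ex by blast
    have "take q ?d = take p e @ [A, B] @ take m (drop p e)"
      using lp m by (simp add: insert_peak_def take_append)
    moreover have "take (q - 2) e = take p e @ take m (drop p e)"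
      using m by (simp add: take_add)
    ultimately show ?thesis using 3 by (simp add: diag_level_def)
  qed
qed

lemma dyck_insert_peak_iff:
  assumes "p \<le> length e"
  shows "dyck (Suc n) (insert_peak p e) \<longleftrightarrow> dyck n e"
proof -
  have "(\<forall>q\<le>length (insert_peak p e). diag_level (insert_peak p e) q \<ge> 0) \<longleftrightarrow>
        (\<forall>q\<le>length e. diag_level e q \<ge> 0)"
  proof (intro iffI allI impI)
    fix q
    assume q: "q \<le> length e"
      and ins: "\<forall>q\<le>length (insert_peak p e). 0 \<le> diag_level (insert_peak p e) q"
    show "diag_level e q \<ge> 0"
    proof (cases "q \<le> p")
      case True
      with ins[rule_format, of q] q assms show ?thesis by (simp add: diag_level_insert_peak)
    next
      case False
      with ins[rule_format, of "q + 2"] q assms show ?thesis by (simp add: diag_level_insert_peak)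
    qed
  qed (use assms in \<open>auto simp: diag_level_insert_peak\<close>)
  then show ?thesis by (simp add: dyck_iff_diag_level_nonneg)
qed

text \<open>The admissible pairs \<open>(k, h)\<close> for inserting an entry \<open>h\<close> at position \<open>k\<close> into the
  area sequence \<open>r\<close>: exactly those for which the new row comes from a final maximal peak.\<close>

definition final_peak_slot :: "nat list \<Rightarrow> nat \<Rightarrow> nat \<Rightarrow> bool" where
  "final_peak_slot r k h \<longleftrightarrow> k \<le> length r \<and> (\<forall>j<length r. r ! j \<le> h) \<and>
     (\<forall>j. k \<le> j \<longrightarrow> j < length r \<longrightarrow> r ! j < h) \<and> (k = 0 \<longrightarrow> h = 0) \<and>
     (0 < k \<longrightarrow> h \<le> r ! (k - 1) + 1)"

lemma max_level_insert_peak: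
  assumes dy: "dyck n e" and p: "p \<le> length e"
    and slot: "final_peak_slot (area e) (cntA (take p e)) (nat (diag_level e p))"
  shows "max_level (insert_peak p e) = diag_level e p + 1"
proof -
  let ?d = "insert_peak p e" and ?k = "cntA (take p e)" and ?h = "nat (diag_level e p)"
  have ln: "length (area e) = n" using dy by (rule length_area_dyck)
  have kn: "?k \<le> n" and all: "\<forall>j<n. area e ! j \<le> ?h"
    using slot ln by (simp_all add: final_peak_slot_def)
  have h: "diag_level e p = int ?h" using dyck_diag_level_nonneg[OF dy p] by simp
  have "\<forall>v\<in>set (area ?d). v \<le> ?h"
  proof
    fix v assume "v \<in> set (area ?d)"
    then obtain j where "j < Suc n" "insert_at ?k ?h (area e) ! j = v"
      using area_insert_peak[of p e] kn ln by (metis in_set_conv_nth length_insert_at)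
    then show "v \<le> ?h" using all kn ln
      by (cases "j < ?k"; cases "j = ?k") (auto simp: nth_insert_at_less nth_insert_at_greater)
  qed
  then have "\<forall>q\<le>length ?d. diag_level ?d q \<le> 1 + int ?h"
    using diag_level_le_Suc_bound_area by blast
  then have "max_level ?d = 1 + int ?h"
    by (rule max_level_eqI[of _ _ "Suc p"]) (use p h in \<open>simp_all add: diag_level_insert_peak\<close>)
  with h show ?thesis by simp
qed

lemma diag_level_after_insert_peak_le:
  assumes dy: "dyck n e" and p: "p \<le> length e"
    and slot: "final_peak_slot (area e) (cntA (take p e)) (nat (diag_level e p))"
    and q: "Suc (Suc p) \<le> q" "q \<le> length (insert_peak p e)"
  shows "diag_level (insert_peak p e) q \<le> diag_level e p"
  using q
proof (induction q rule: dec_induct)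
  case base
  then show ?case using p by (simp add: diag_level_insert_peak)
next
  case (step q)
  let ?d = "insert_peak p e" and ?k = "cntA (take p e)" and ?h = "nat (diag_level e p)"
  have dy': "dyck (Suc n) ?d" using dy p by (simp add: dyck_insert_peak_iff)
  have q: "q < length ?d" using step by simp
  show ?case
  proof (cases "?d ! q")
    case A
    have ln: "length (area e) = n" using dy by (rule length_area_dyck)
    have row: "area ?d ! cntA (take q ?d) = nat (diag_level ?d q)" "cntA (take q ?d) < Suc n"
      using area_nth_up_step[OF dy' q A] by auto
    have "Suc ?k \<le> cntA (take q ?d)"
      using cntA_take_mono[OF step(1), of ?d] cntA_take_insert_peak[OF p] by simp
    then have "area ?d ! cntA (take q ?d) < ?h"
      using slot ln row(2) area_insert_peak[of p e]
      by (simp add: nth_insert_at_greater final_peak_slot_def)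
    then show ?thesis
      using row(1) dyck_diag_level_nonneg[OF dy' less_imp_le[OF q]] diag_level_Suc[OF q] A by simp
  next
    case B
    then show ?thesis using diag_level_Suc[OF q] step.IH[OF less_imp_le[OF q]] by simp
  qed
qed

lemma is_final_max_peak_insert_peak:
  assumes dy: "dyck n e" and p: "p \<le> length e"
    and slot: "final_peak_slot (area e) (cntA (take p e)) (nat (diag_level e p))"
  shows "is_final_max_peak (insert_peak p e) p"
  unfolding is_final_max_peak_def is_max_peak_def
proof (intro conjI allI impI)
  note ml = max_level_insert_peak[OF assms]
  show "is_peak (insert_peak p e) p" using p by (rule is_peak_insert_peak)
  show "diag_level (insert_peak p e) (Suc p) = max_level (insert_peak p e)"
    using ml p by (simp add: diag_level_insert_peak)
  fix k'
  assume "is_peak (insert_peak p e) k' \<and>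
    diag_level (insert_peak p e) (Suc k') = max_level (insert_peak p e)"
  then show "k' \<le> p"
    using diag_level_after_insert_peak_le[OF assms, of "Suc k'"] ml by (fastforce simp: is_peak_def)
qed

text \<open>Between the up step of row \<open>k - 1\<close>, which ends one level above its area entry, and the
  up step of row \<open>k\<close>, which starts at the level of its area entry, the path only takes right steps;
  so every level in between is attained at a point preceded by exactly \<open>k\<close> up steps.\<close>

lemma area_from_point_exists:
  assumes "r \<le> u" "\<forall>q\<le>length e. r + cntB (take q e) \<le> u + cntA (take q e)" "k \<le> cntA e"
    "k = 0 \<longrightarrow> h \<le> u - r"
    "0 < k \<longrightarrow> h \<le> area_from u r e ! (k - 1) + 1"
    "k < cntA e \<longrightarrow> area_from u r e ! k \<le> h"
    "k = cntA e \<longrightarrow> (u + cntA e) - (r + cntB e) \<le> h"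
  shows "\<exists>p\<le>length e. cntA (take p e) = k \<and> (u + cntA (take p e)) - (r + cntB (take p e)) = h"
  using assms
proof (induction e arbitrary: u r k)
  case Nil
  then show ?case by auto
next
  case (Cons a e)
  have pre: "\<forall>q\<le>length e. r + cntB (take (Suc q) (a # e)) \<le> u + cntA (take (Suc q) (a # e))"
    using Cons.prems(2) by auto
  show ?case
  proof (cases a)
    case A
    show ?thesis
    proof (cases k)
      case 0
      then have "h = u - r" using Cons.prems A by auto
      with 0 show ?thesis by (intro exI[of _ 0]) auto
    next
      case (Suc k')
      have "\<exists>p\<le>length e. cntA (take p e) = k' \<and>
          (Suc u + cntA (take p e)) - (r + cntB (take p e)) = h"
      proof (rule Cons.IH)
        show "0 < k' \<longrightarrow> h \<le> area_from (Suc u) r e ! (k' - 1) + 1"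
          using Cons.prems(5) Suc A by (cases k') auto
        show "r \<le> Suc u" using Cons.prems by simp
        show "\<forall>q\<le>length e. r + cntB (take q e) \<le> Suc u + cntA (take q e)" using pre A by simp
        show "k' \<le> cntA e" using Cons.prems Suc A by simp
        show "k' = 0 \<longrightarrow> h \<le> Suc u - r" using Cons.prems Suc A by auto
        show "k' < cntA e \<longrightarrow> area_from (Suc u) r e ! k' \<le> h" using Cons.prems(6) Suc A by auto
        show "k' = cntA e \<longrightarrow> Suc u + cntA e - (r + cntB e) \<le> h" using Cons.prems(7) Suc A by auto
      qed
      then obtain p where "p \<le> length e" "cntA (take p e) = k'"
        "(Suc u + cntA (take p e)) - (r + cntB (take p e)) = h" by blast
      with A Suc show ?thesis by (intro exI[of _ "Suc p"]) auto
    qed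
  next
    case B
    have ru: "Suc r \<le> u" using Cons.prems(2)[rule_format, of 1] B by simp
    show ?thesis
    proof (cases "k = 0 \<and> h = u - r")
      case True
      then show ?thesis by (intro exI[of _ 0]) auto
    next
      case False
      have "\<exists>p\<le>length e. cntA (take p e) = k \<and>
          (u + cntA (take p e)) - (Suc r + cntB (take p e)) = h"
      proof (rule Cons.IH)
        show "\<forall>q\<le>length e. Suc r + cntB (take q e) \<le> u + cntA (take q e)" using pre B by simp
        show "k = 0 \<longrightarrow> h \<le> u - Suc r" using Cons.prems(4) False by auto
      qed (use Cons.prems ru B in simp_all)
      then obtain p where "p \<le> length e" "cntA (take p e) = k"
        "(u + cntA (take p e)) - (Suc r + cntB (take p e)) = h" by blast
      with B show ?thesis by (intro exI[of _ "Suc p"]) auto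
    qed
  qed
qed

lemma final_peak_slot_point_exists:
  assumes dy: "dyck n e" and slot: "final_peak_slot (area e) k h"
  obtains p where "p \<le> length e" "cntA (take p e) = k" "nat (diag_level e p) = h"
proof -
  have "\<exists>p\<le>length e. cntA (take p e) = k \<and> (0 + cntA (take p e)) - (0 + cntB (take p e)) = h"
    by (rule area_from_point_exists)
      (use dy slot length_area_dyck[OF dy] in \<open>auto simp: dyck_def area_def final_peak_slot_def\<close>)
  with that show ?thesis by (auto simp: nat_diag_level)
qed

section \<open>Removing the final maximal peak\<close>

lemma take_insert_peak: "p \<le> length e \<Longrightarrow> take p (insert_peak p e) = take p e"
  by (simp add: insert_peak_def)

lemma insert_peak_remove_peak:
  assumes "is_peak d p"
  shows "insert_peak p (take p d @ drop (Suc (Suc p)) d) = d"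
    and "p \<le> length (take p d @ drop (Suc (Suc p)) d)"
proof -
  have p: "Suc p < length d" "d ! p = A" "d ! Suc p = B" using assms by (auto simp: is_peak_def)
  then have "d = take p d @ [A, B] @ drop (Suc (Suc p)) d"
    by (metis Cons_nth_drop_Suc Suc_lessD append_Cons append_Nil id_take_nth_drop)
  with p show "insert_peak p (take p d @ drop (Suc (Suc p)) d) = d"
    by (simp add: insert_peak_def)
  show "p \<le> length (take p d @ drop (Suc (Suc p)) d)" using p by simp
qed

lemma last_max_level_point_is_peak:
  assumes dy: "dyck (Suc n) d"
  obtains p where "is_peak d p" "diag_level d (Suc p) = max_level d"
    "\<And>q. Suc p < q \<Longrightarrow> q \<le> length d \<Longrightarrow> diag_level d q < max_level d"
proof -
  define M where "M = max_level d"
  define Q where "Q = {q. q \<le> length d \<and> diag_level d q = M}"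
  define q where "q = Max Q"
  have le_M: "\<And>q'. q' \<le> length d \<Longrightarrow> diag_level d q' \<le> M"
    unfolding M_def by (rule diag_level_le_max_level)
  have "M \<in> diag_level d ` {0..length d}"
    unfolding M_def max_level_def by (rule Max_in) auto
  then have "Q \<noteq> {}" "finite Q" unfolding Q_def by auto
  then have q: "q \<le> length d" "diag_level d q = M" and q_last: "\<And>q'. q' \<in> Q \<Longrightarrow> q' \<le> q"
    using Max_in[of Q] by (auto simp: q_def Q_def)
  have len: "length d = 2 * Suc n" by (rule length_dyck[OF dy])
  have "diag_level d 1 \<ge> 0" using dyck_diag_level_nonneg[OF dy, of 1] len by simp
  then have "diag_level d 1 = 1" using diag_level_Suc[of 0 d] len by (auto split: if_splits)
  then have M1: "M \<ge> 1" using le_M[of 1] len by simp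
  have "diag_level d (length d) = 0" using dy by (simp add: diag_level_def dyck_def)
  then have q_pos: "0 < q" "q < length d" using q M1 by (auto intro: Nat.gr0I le_neq_implies_less)
  define p where "p = q - 1"
  have pq: "Suc p = q" using q_pos p_def by simp
  have "d ! p = A"
  proof (rule ccontr)
    assume "d ! p \<noteq> A"
    then show False using diag_level_Suc[of p d] le_M[of p] pq q q_pos by auto
  qed
  moreover have "d ! q = B"
  proof (rule ccontr)
    assume "d ! q \<noteq> B"
    then have "d ! q = A" by (cases "d ! q") auto
    then show False using diag_level_Suc[of q d] le_M[of "Suc q"] q q_pos by auto
  qed
  ultimately show ?thesis
  proof (intro that[of p])
    show "diag_level d (Suc p) = max_level d" using pq q by (simp add: M_def)
    show "diag_level d q' < max_level d" if q': "Suc p < q'" "q' \<le> length d" for q'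
      using le_M[of q'] q_last[of q'] q' pq by (force simp: Q_def M_def)
  qed (use pq q_pos in \<open>simp add: is_peak_def\<close>)
qed

lemma area_row_level:
  assumes "dyck n d" "j < n"
  obtains pos where "pos < length d" "cntA (take pos d) = j"
    "int (area d ! j) + 1 = diag_level d (Suc pos)"
proof -
  obtain pos where pos: "pos < length d" "d ! pos = A" "cntA (take pos d) = j"
    "area d ! j = nat (diag_level d pos)"
    using ex_up_step_at_area_row[OF assms] by blast
  moreover have "diag_level d pos \<ge> 0" using dyck_diag_level_nonneg[OF assms(1)] pos(1) by simp
  ultimately show ?thesis using that diag_level_Suc[OF pos(1)] by auto
qed

lemma final_peak_slot_remove_peak:
  assumes dy: "dyck (Suc n) (insert_peak p e)" and p: "p \<le> length e"
    and top: "diag_level (insert_peak p e) (Suc p) = max_level (insert_peak p e)"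
    and last: "\<And>q. Suc p < q \<Longrightarrow> q \<le> length (insert_peak p e) \<Longrightarrow>
      diag_level (insert_peak p e) q < max_level (insert_peak p e)"
  shows "final_peak_slot (area e) (cntA (take p e)) (nat (diag_level e p))"
proof -
  let ?d = "insert_peak p e" and ?k = "cntA (take p e)" and ?h = "nat (diag_level e p)"
  have dye: "dyck n e" using dy p by (simp add: dyck_insert_peak_iff)
  have le: "length (area e) = n" by (rule length_area_dyck[OF dye])
  have h: "int ?h + 1 = max_level ?d"
    using top dyck_diag_level_nonneg[OF dye p] p by (simp add: diag_level_insert_peak)
  have ad: "area ?d = insert_at ?k ?h (area e)" by (rule area_insert_peak)
  have kn: "?k \<le> n" using cntA_take_mono[of p "length e" e] dye p by (simp add: dyck_def)
  have row_le: "area ?d ! j \<le> ?h" if j: "j < Suc n" for j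
  proof -
    obtain pos where "pos < length ?d" "int (area ?d ! j) + 1 = diag_level ?d (Suc pos)"
      using area_row_level[OF dy j] by blast
    then show ?thesis using diag_level_le_max_level[of "Suc pos" ?d] h by linarith
  qed
  have row_less: "area ?d ! j < ?h" if j: "?k < j" "j < Suc n" for j
  proof -
    obtain pos where pos: "pos < length ?d" "cntA (take pos ?d) = j"
      "int (area ?d ! j) + 1 = diag_level ?d (Suc pos)"
      using area_row_level[OF dy j(2)] by blast
    have "p < pos"
      using cntA_take_mono[of pos p ?d] pos(2) j(1) take_insert_peak[OF p] by fastforce
    then show ?thesis using last[of "Suc pos"] pos h by linarith
  qed
  have "area e ! j \<le> ?h" if "j < n" for j
  proof (cases "j < ?k")
    case True
    then show ?thesis using row_le[of j] that ad kn le by (simp add: nth_insert_at_less)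
  next
    case False
    then show ?thesis using row_le[of "Suc j"] that ad kn le by (simp add: nth_insert_at_greater)
  qed
  moreover have "\<forall>j. ?k \<le> j \<longrightarrow> j < n \<longrightarrow> area e ! j < ?h"
    using row_less[of "Suc _"] ad kn le by (auto simp: nth_insert_at_greater)
  moreover have "area ?d ! ?k = ?h" using ad kn le by simp
  then have "?k = 0 \<longrightarrow> ?h = 0" using area_dyck_0[OF dy] by auto
  moreover have "?h \<le> area e ! (?k - 1) + 1" if "0 < ?k"
    using area_dyck_Suc_nth_le[OF dy, of "?k - 1"] that ad kn le \<open>area ?d ! ?k = ?h\<close>
    by (simp add: nth_insert_at_less)
  ultimately show ?thesis using kn le by (simp add: final_peak_slot_def)
qed

lemma dyck_remove_final_max_peak:
  assumes dy: "dyck (Suc n) d"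
  obtains p e where "p \<le> length e" "dyck n e" "d = insert_peak p e"
    "final_peak_slot (area e) (cntA (take p e)) (nat (diag_level e p))"
proof -
  obtain p where peak: "is_peak d p" and top: "diag_level d (Suc p) = max_level d"
    and last: "\<And>q. Suc p < q \<Longrightarrow> q \<le> length d \<Longrightarrow> diag_level d q < max_level d"
    using last_max_level_point_is_peak[OF dy] by blast
  define e where "e = take p d @ drop (Suc (Suc p)) d"
  have d: "d = insert_peak p e" and p: "p \<le> length e"
    using insert_peak_remove_peak[OF peak] by (simp_all add: e_def)
  show ?thesis
  proof (rule that[OF p _ d])
    show "dyck n e" using dy p d by (simp add: dyck_insert_peak_iff)
    show "final_peak_slot (area e) (cntA (take p e)) (nat (diag_level e p))"
      by (rule final_peak_slot_remove_peak) (use dy top last p d in simp_all)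
  qed
qed

section \<open>Down-degrees in the poset of an area sequence\<close>

text \<open>\<open>area_prec\<close> is \<^const>\<open>Pw\<close> with elements indexed from \<open>0\<close>.\<close>

definition area_prec :: "nat list \<Rightarrow> nat \<Rightarrow> nat \<Rightarrow> bool" where
  "area_prec w i j \<longleftrightarrow> i < length w \<and> j < length w \<and>
     (w ! i + 2 \<le> w ! j \<or> (w ! i + 1 = w ! j \<and> i < j))"

definition area_down_deg :: "nat list \<Rightarrow> nat \<Rightarrow> nat" where
  "area_down_deg w j = card {i. area_prec w i j}"

definition area_down_degs :: "nat list \<Rightarrow> nat multiset" where
  "area_down_degs w = image_mset (area_down_deg w) (mset_set {..<length w})"

text \<open>The down-degree of an entry \<open>h\<close> inserted at position \<open>k\<close> into \<open>r\<close>.\<close>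

definition slot_down_deg :: "nat list \<Rightarrow> nat \<Rightarrow> nat \<Rightarrow> nat" where
  "slot_down_deg r h k = card {i. i < length r \<and> (r ! i + 2 \<le> h \<or> (r ! i + 1 = h \<and> i < k))}"

lemma slot_down_deg_Suc:
  "slot_down_deg r h (Suc j) =
    slot_down_deg r h j + (if j < length r \<and> r ! j + 1 = h then 1 else 0)"
proof -
  let ?S = "\<lambda>k. {i. i < length r \<and> (r ! i + 2 \<le> h \<or> (r ! i + 1 = h \<and> i < k))}"
  show ?thesis
  proof (cases "j < length r \<and> r ! j + 1 = h")
    case True
    then have "?S (Suc j) = insert j (?S j)" "j \<notin> ?S j" by auto
    with True show ?thesis by (simp add: slot_down_deg_def)
  next
    case False
    then have "?S (Suc j) = ?S j" by (auto simp: less_Suc_eq)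
    with False show ?thesis by (simp add: slot_down_deg_def)
  qed
qed

lemma slot_down_deg_mono: "j \<le> j' \<Longrightarrow> slot_down_deg r h j \<le> slot_down_deg r h j'"
  by (induction j' rule: dec_induct) (auto simp: slot_down_deg_Suc intro: le_trans)

lemma slot_down_deg_length_eq_Suc_0:
  "slot_down_deg r h (length r) = slot_down_deg r (Suc h) 0"
proof -
  have "{i. i < length r \<and> (r ! i + 2 \<le> h \<or> (r ! i + 1 = h \<and> i < length r))} =
        {i. i < length r \<and> (r ! i + 2 \<le> Suc h \<or> (r ! i + 1 = Suc h \<and> i < 0))}" by auto
  then show ?thesis by (simp add: slot_down_deg_def)
qed

lemma slot_down_deg_less_Suc:
  assumes "k1 \<le> length r" "k2 \<le> length r" "0 < k2" "r ! (k2 - 1) = m"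
  shows "slot_down_deg r m k1 < slot_down_deg r (Suc m) k2"
proof -
  have "slot_down_deg r m k1 \<le> slot_down_deg r (Suc m) 0"
    using slot_down_deg_mono[OF assms(1), of r m] by (simp add: slot_down_deg_length_eq_Suc_0)
  also have "\<dots> \<le> slot_down_deg r (Suc m) (k2 - 1)" by (rule slot_down_deg_mono) simp
  also have "\<dots> < slot_down_deg r (Suc m) k2"
    using slot_down_deg_Suc[of r "Suc m" "k2 - 1"] assms by simp
  finally show ?thesis .
qed

lemma slot_down_deg_less:
  assumes "k1 < k2" "k2 \<le> length r" "r ! (k2 - 1) + 1 = h"
  shows "slot_down_deg r h k1 < slot_down_deg r h k2"
proof -
  have "slot_down_deg r h k1 \<le> slot_down_deg r h (k2 - 1)"
    using assms by (intro slot_down_deg_mono) simp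
  also have "\<dots> < slot_down_deg r h k2"
    using slot_down_deg_Suc[of r h "k2 - 1"] assms by simp
  finally show ?thesis .
qed

lemma final_peak_slot_pos: "final_peak_slot r k h \<Longrightarrow> r \<noteq> [] \<Longrightarrow> 0 < k"
  by (rule ccontr) (auto simp: final_peak_slot_def)

lemma final_peak_slot_level:
  assumes slot: "final_peak_slot r k h" and r: "r \<noteq> []"
  shows "h = Max (set r) \<or> (h = Suc (Max (set r)) \<and> r ! (k - 1) = Max (set r))"
proof -
  have k: "0 < k" "k - 1 < length r" using final_peak_slot_pos[OF assms] slot
    by (auto simp: final_peak_slot_def)
  then have "h \<le> r ! (k - 1) + 1" "r ! (k - 1) \<le> Max (set r)"
    using slot by (auto simp: final_peak_slot_def)
  moreover have "Max (set r) \<le> h"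
    using Max_in[of "set r"] r slot by (auto simp: final_peak_slot_def in_set_conv_nth)
  ultimately show ?thesis by linarith
qed

lemma final_peak_slot_unique:
  assumes slot1: "final_peak_slot r k1 h1" and slot2: "final_peak_slot r k2 h2"
    and eq: "slot_down_deg r h1 k1 = slot_down_deg r h2 k2"
  shows "k1 = k2 \<and> h1 = h2"
proof (cases "r = []")
  case True
  then show ?thesis using slot1 slot2 by (simp add: final_peak_slot_def)
next
  case False
  have len: "k1 \<le> length r" "k2 \<le> length r" and pos: "0 < k1" "0 < k2"
    using slot1 slot2 final_peak_slot_pos[OF _ False] by (auto simp: final_peak_slot_def)
  have h: "h1 = h2"
    using final_peak_slot_level[OF slot1 False] final_peak_slot_level[OF slot2 False] eq
      slot_down_deg_less_Suc[OF len pos(2)] slot_down_deg_less_Suc[OF len(2,1) pos(1)]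
    by auto
  txt \<open>Two slots with the same level: the later one starts one level below it, so its
    down-degree is strictly larger.\<close>
  have later_slot_less: "slot_down_deg r h k < slot_down_deg r h k'"
    if "final_peak_slot r k h" "final_peak_slot r k' h" "k < k'" for k k' h
  proof (rule slot_down_deg_less[OF \<open>k < k'\<close>])
    have "k \<le> k' - 1" "k' - 1 < length r" using that by (auto simp: final_peak_slot_def)
    then have "r ! (k' - 1) < h" "h \<le> r ! (k' - 1) + 1"
      using that \<open>k < k'\<close> unfolding final_peak_slot_def by auto
    then show "r ! (k' - 1) + 1 = h" by simp
  qed (use that in \<open>simp add: final_peak_slot_def\<close>)
  have "k1 = k2"
    using later_slot_less[of k1 h1 k2] later_slot_less[of k2 h1 k1] slot1 slot2 h eq
    by (cases k1 k2 rule: linorder_cases) auto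
  with h show ?thesis by simp
qed

lemma area_down_deg_eq_slot_down_deg: "j < length r \<Longrightarrow> area_down_deg r j = slot_down_deg r (r ! j) j"
  unfolding area_down_deg_def slot_down_deg_def area_prec_def by simp

text \<open>By \<open>final_peak_slot_level\<close> a slot lies at level \<open>Max (set r)\<close> or one above; the values
  \<open>t\<close> reached at the upper level are exactly those above \<^term>\<open>slot_down_deg r (Suc (Max (set r))) 0\<close>.\<close>

lemma final_peak_slot_above_max_exists:
  assumes r: "r \<noteq> []" and t: "slot_down_deg r (Suc (Max (set r))) 0 < t" "t \<le> length r"
  shows "\<exists>k. final_peak_slot r k (Suc (Max (set r))) \<and> slot_down_deg r (Suc (Max (set r))) k = t"
proof -
  define m where "m = Max (set r)"
  have m_ge: "\<And>j. j < length r \<Longrightarrow> r ! j \<le> m" using m_def by simp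
  have "{i. i < length r \<and> (r ! i + 2 \<le> Suc m \<or> (r ! i + 1 = Suc m \<and> i < length r))} =
      {..<length r}"
    using m_ge by fastforce
  then have full: "t \<le> slot_down_deg r (Suc m) (length r)" using t by (simp add: slot_down_deg_def)
  define k where "k = (LEAST k. t \<le> slot_down_deg r (Suc m) k)"
  have kn: "k \<le> length r" and tk: "t \<le> slot_down_deg r (Suc m) k"
    using Least_le[of "\<lambda>k. t \<le> slot_down_deg r (Suc m) k", OF full]
      LeastI[of "\<lambda>k. t \<le> slot_down_deg r (Suc m) k", OF full] by (simp_all add: k_def)
  have k0: "k \<noteq> 0" using tk t m_def by (cases k) auto
  have tk1: "\<not> t \<le> slot_down_deg r (Suc m) (k - 1)"
    using not_less_Least[of "k - 1" "\<lambda>k. t \<le> slot_down_deg r (Suc m) k"] k_def k0 by simp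
  have "slot_down_deg r (Suc m) k = slot_down_deg r (Suc m) (k - 1) +
      (if k - 1 < length r \<and> r ! (k - 1) + 1 = Suc m then 1 else 0)"
    using slot_down_deg_Suc[of r "Suc m" "k - 1"] k0 by simp
  then have "k - 1 < length r \<and> r ! (k - 1) = m" "slot_down_deg r (Suc m) k = t"
    using tk tk1 by (auto split: if_splits)
  moreover have "final_peak_slot r k (Suc m)"
    using kn m_ge k0 calculation(1) by (auto simp: final_peak_slot_def le_Suc_eq less_Suc_eq_le)
  ultimately show ?thesis unfolding m_def by blast
qed

lemma final_peak_slot_at_max_exists:
  assumes r: "r \<noteq> []" and dl: "\<forall>j<length r. area_down_deg r j \<le> t"
    and t: "t \<le> slot_down_deg r (Suc (Max (set r))) 0"
  shows "\<exists>k. final_peak_slot r k (Max (set r)) \<and> slot_down_deg r (Max (set r)) k = t"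
proof -
  define m where "m = Max (set r)"
  have m_ge: "\<And>j. j < length r \<Longrightarrow> r ! j \<le> m" using m_def by simp
  define J where "J = {j. j < length r \<and> r ! j = m}"
  have "m \<in> set r" using r by (simp add: m_def)
  then have "J \<noteq> {}" by (auto simp: J_def in_set_conv_nth)
  moreover have "finite J" by (simp add: J_def)
  ultimately have jl: "Max J < length r" "r ! Max J = m" and jl_last: "\<And>j. j \<in> J \<Longrightarrow> j \<le> Max J"
    using Max_in[of J] by (auto simp: J_def)
  define jl where "jl = Max J"
  have "slot_down_deg r m jl \<le> t"
    using dl[rule_format, of jl] jl area_down_deg_eq_slot_down_deg[of jl r] by (simp add: jl_def)
  moreover have "slot_down_deg r m (Suc jl) = slot_down_deg r m jl"
    using slot_down_deg_Suc[of r m jl] jl by (simp add: jl_def)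
  ultimately have start: "slot_down_deg r m (Suc jl) \<le> t" by simp
  define P where "P = (\<lambda>k. Suc jl \<le> k \<and> t \<le> slot_down_deg r m k)"
  define k where "k = (LEAST k. P k)"
  have "P (length r)"
    using t jl slot_down_deg_length_eq_Suc_0[of r m] by (simp add: P_def m_def jl_def)
  then have kn: "k \<le> length r" and Pk: "P k"
    using Least_le[of P] LeastI[of P] by (auto simp: k_def)
  have ft: "slot_down_deg r m k = t \<and> (0 < k \<longrightarrow> m \<le> r ! (k - 1) + 1)"
  proof (cases "k = Suc jl")
    case True
    then show ?thesis using Pk start jl by (simp add: P_def jl_def)
  next
    case False
    then have k1: "Suc jl \<le> k - 1" "k - 1 < k" using Pk by (auto simp: P_def)
    then have "\<not> P (k - 1)" using not_less_Least[of "k - 1" P] k_def by blast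
    then have "\<not> t \<le> slot_down_deg r m (k - 1)" using k1 by (simp add: P_def)
    moreover have "slot_down_deg r m k = slot_down_deg r m (k - 1) +
        (if k - 1 < length r \<and> r ! (k - 1) + 1 = m then 1 else 0)"
      using slot_down_deg_Suc[of r m "k - 1"] k1
      by (metis Suc_diff_1 gr_implies_not0 linorder_neqE_nat)
    ultimately show ?thesis using Pk by (auto simp: P_def split: if_splits)
  qed
  have "r ! j < m" if "k \<le> j" "j < length r" for j
  proof -
    have "j \<notin> J" using jl_last Pk that by (fastforce simp: P_def jl_def)
    then show ?thesis using m_ge[of j] that by (fastforce simp: J_def)
  qed
  then have "final_peak_slot r k m"
    using kn m_ge ft Pk by (auto simp: final_peak_slot_def P_def)
  then show ?thesis using ft unfolding m_def by blast
qed

lemma final_peak_slot_exists: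
  assumes dl: "\<forall>j<length r. area_down_deg r j \<le> t" and tn: "t \<le> length r"
  shows "\<exists>k h. final_peak_slot r k h \<and> slot_down_deg r h k = t"
proof (cases "r = []")
  case True
  then show ?thesis using tn
    by (intro exI[of _ 0]) (auto simp: final_peak_slot_def slot_down_deg_def)
next
  case False
  then show ?thesis
    using final_peak_slot_above_max_exists[OF False _ tn] final_peak_slot_at_max_exists[OF False dl]
    by (cases "slot_down_deg r (Suc (Max (set r))) 0 < t") auto
qed

definition skip_index :: "nat \<Rightarrow> nat \<Rightarrow> nat" where
  "skip_index k i = (if i < k then i else Suc i)"

lemma inj_skip_index: "inj_on (skip_index k) S"
  by (auto simp: inj_on_def skip_index_def split: if_splits)

lemma skip_index_less_iff: "skip_index k i < k \<longleftrightarrow> i < k"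
  by (simp add: skip_index_def)

lemma skip_index_neq: "skip_index k i \<noteq> k"
  by (simp add: skip_index_def)

lemma nth_insert_at_skip_index:
  "k \<le> length r \<Longrightarrow> i < length r \<Longrightarrow> insert_at k h r ! skip_index k i = r ! i"
  by (auto simp: skip_index_def nth_insert_at_less nth_insert_at_greater)

lemma ex_skip_index:
  assumes "k \<le> n" "i < Suc n" "i \<noteq> k"
  shows "\<exists>i'<n. i = skip_index k i'"
proof (cases "i < k")
  case True
  then show ?thesis using assms by (intro exI[of _ i]) (auto simp: skip_index_def)
next
  case False
  then show ?thesis using assms by (intro exI[of _ "i - 1"]) (auto simp: skip_index_def)
qed

lemma lessThan_Suc_eq_insert_skip_index:
  "k \<le> n \<Longrightarrow> {..<Suc n} = insert k (skip_index k ` {..<n})"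
proof (intro equalityI subsetI)
  fix i assume "k \<le> n" "i \<in> {..<Suc n}"
  then show "i \<in> insert k (skip_index k ` {..<n})"
    using ex_skip_index[of k n i] by (cases "i = k") auto
qed (auto simp: skip_index_def)

lemma finite_area_prec [simp]: "finite {i. area_prec w i j}"
  by (rule finite_subset[of _ "{..<length w}"]) (auto simp: area_prec_def)

lemma area_prec_insert_at_skip_index:
  assumes "k \<le> length r" "i < length r" "j < length r"
  shows "area_prec (insert_at k h r) (skip_index k i) (skip_index k j) \<longleftrightarrow> area_prec r i j"
  using assms nth_insert_at_skip_index[OF assms(1,2), of h]
    nth_insert_at_skip_index[OF assms(1,3), of h]
  by (auto simp: area_prec_def skip_index_def split: if_splits)

lemma area_down_deg_insert_at_skip_index:
  assumes k: "k \<le> length r" and h: "\<forall>j<length r. r ! j \<le> h" and j: "j < length r"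
  shows "area_down_deg (insert_at k h r) (skip_index k j) = area_down_deg r j"
proof -
  let ?w = "insert_at k h r"
  have "\<not> area_prec ?w k (skip_index k j)"
    using nth_insert_at_skip_index[OF k j, of h] h[rule_format, OF j] k by (simp add: area_prec_def)
  have "{i. area_prec ?w i (skip_index k j)} = skip_index k ` {i. area_prec r i j}"
  proof (intro equalityI subsetI)
    fix i assume i: "i \<in> {i. area_prec ?w i (skip_index k j)}"
    then have "i < Suc (length r)" "i \<noteq> k"
      using k \<open>\<not> area_prec ?w k (skip_index k j)\<close> by (auto simp: area_prec_def)
    then obtain i' where "i' < length r" "i = skip_index k i'" using ex_skip_index[OF k] by blast
    then show "i \<in> skip_index k ` {i. area_prec r i j}"
      using i area_prec_insert_at_skip_index[OF k _ j] by auto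
  next
    fix i assume "i \<in> skip_index k ` {i. area_prec r i j}"
    then obtain i' where "area_prec r i' j" "i = skip_index k i'" by blast
    then show "i \<in> {i. area_prec ?w i (skip_index k j)}"
      using area_prec_insert_at_skip_index[OF k _ j] by (auto simp: area_prec_def)
  qed
  then show ?thesis unfolding area_down_deg_def by (simp add: card_image[OF inj_skip_index])
qed

lemma area_down_deg_insert_at_new:
  assumes k: "k \<le> length r"
  shows "area_down_deg (insert_at k h r) k = slot_down_deg r h k"
proof -
  let ?w = "insert_at k h r"
  let ?S = "{i. i < length r \<and> (r ! i + 2 \<le> h \<or> (r ! i + 1 = h \<and> i < k))}"
  have key: "area_prec ?w (skip_index k i) k \<longleftrightarrow> i \<in> ?S" if i: "i < length r" for i
    using nth_insert_at_skip_index[OF k i, of h] k i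
    by (auto simp: area_prec_def skip_index_less_iff skip_index_def)
  have "{i. area_prec ?w i k} = skip_index k ` ?S"
  proof (intro equalityI subsetI)
    fix i assume i: "i \<in> {i. area_prec ?w i k}"
    then have "i < Suc (length r)" "i \<noteq> k" using k by (auto simp: area_prec_def)
    then obtain i' where "i' < length r" "i = skip_index k i'" using ex_skip_index[OF k] by blast
    then show "i \<in> skip_index k ` ?S" using i key[of i'] by simp
  qed (use key in auto)
  then show ?thesis
    unfolding area_down_deg_def slot_down_deg_def by (simp add: card_image[OF inj_skip_index])
qed

lemma area_down_degs_insert_at:
  assumes k: "k \<le> length r" and h: "\<forall>j<length r. r ! j \<le> h"
  shows "area_down_degs (insert_at k h r) = add_mset (slot_down_deg r h k) (area_down_degs r)"
proof -
  let ?w = "insert_at k h r"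
  have "k \<notin> skip_index k ` {..<length r}" using skip_index_neq by (metis imageE)
  then have "mset_set {..<length ?w} =
      add_mset k (image_mset (skip_index k) (mset_set {..<length r}))"
    using k lessThan_Suc_eq_insert_skip_index[OF k]
    by (simp add: image_mset_mset_set[OF inj_skip_index])
  then have "area_down_degs ?w =
      add_mset (area_down_deg ?w k)
        (image_mset (\<lambda>j. area_down_deg ?w (skip_index k j)) (mset_set {..<length r}))"
    unfolding area_down_degs_def by (simp add: image_mset.compositionality comp_def)
  also have "image_mset (\<lambda>j. area_down_deg ?w (skip_index k j)) (mset_set {..<length r}) =
      area_down_degs r"
    unfolding area_down_degs_def
    by (rule image_mset_cong) (use area_down_deg_insert_at_skip_index[OF k h] in auto)
  finally show ?thesis using area_down_deg_insert_at_new[OF k] by simp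
qed

lemma area_down_deg_mono:
  assumes "j < length w" "j' < length w" "w ! j < w ! j' \<or> (w ! j = w ! j' \<and> j \<le> j')"
  shows "area_down_deg w j \<le> area_down_deg w j'"
  unfolding area_down_deg_def by (rule card_mono) (use assms in \<open>auto simp: area_prec_def\<close>)

lemma area_down_deg_insert_at_le:
  assumes slot: "final_peak_slot r k h" and j: "j < Suc (length r)"
  shows "area_down_deg (insert_at k h r) j \<le> slot_down_deg r h k"
proof (cases "j = k")
  case True
  then show ?thesis using slot area_down_deg_insert_at_new by (simp add: final_peak_slot_def)
next
  case False
  have k: "k \<le> length r" using slot by (simp add: final_peak_slot_def)
  obtain j' where j': "j' < length r" "j = skip_index k j'"
    using ex_skip_index[OF k j False] by blast
  have "r ! j' \<le> h" and "k \<le> j' \<Longrightarrow> r ! j' < h"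
    using slot j'(1) by (auto simp: final_peak_slot_def)
  then have "r ! j' < h \<or> (r ! j' = h \<and> skip_index k j' \<le> k)"
    by (cases "j' < k") (auto simp: skip_index_def)
  then have "area_down_deg (insert_at k h r) (skip_index k j') \<le> area_down_deg (insert_at k h r) k"
    using k j' nth_insert_at_skip_index[OF k j'(1), of h]
    by (intro area_down_deg_mono) (auto simp: skip_index_def)
  then show ?thesis using area_down_deg_insert_at_new[OF k] j' by simp
qed

lemma area_down_degs_le_slot_down_deg:
  assumes slot: "final_peak_slot r k h"
  shows "\<forall>x\<in>#area_down_degs r. x \<le> slot_down_deg r h k"
proof -
  have k: "k \<le> length r" and h: "\<forall>j<length r. r ! j \<le> h"
    using slot by (auto simp: final_peak_slot_def)
  have "\<forall>x\<in>#area_down_degs (insert_at k h r). x \<le> slot_down_deg r h k"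
    using area_down_deg_insert_at_le[OF slot] k by (auto simp: area_down_degs_def)
  then show ?thesis using area_down_degs_insert_at[OF k h] by simp
qed

lemma add_mset_eq_max_elem:
  fixes t1 t2 :: "'a::linorder"
  assumes "add_mset t1 X1 = add_mset t2 X2" "\<forall>x\<in>#X1. x \<le> t1" "\<forall>x\<in>#X2. x \<le> t2"
  shows "t1 = t2" and "X1 = X2"
proof -
  have "t1 = Max_mset (add_mset t1 X1)" "t2 = Max_mset (add_mset t2 X2)"
    using assms(2,3) by (auto intro: Max_eqI[symmetric])
  then show "t1 = t2" using assms(1) by simp
  with assms(1) show "X1 = X2" by simp
qed

section \<open>Relations determined by their down-degrees\<close>

definition down_deg :: "nat \<Rightarrow> (nat \<Rightarrow> nat \<Rightarrow> bool) \<Rightarrow> nat \<Rightarrow> nat" where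
  "down_deg n R j = card {i\<in>{1..n}. R i j}"

definition down_degs :: "nat \<Rightarrow> (nat \<Rightarrow> nat \<Rightarrow> bool) \<Rightarrow> nat multiset" where
  "down_degs n R = image_mset (down_deg n R) (mset_set {1..n})"

text \<open>Both unit interval orders and the posets \<^term>\<open>Pw w\<close> are nested: along a linear order
  \<open>key\<close> of the elements, the sets of predecessors grow and the sets of successors shrink.\<close>

definition nested :: "nat \<Rightarrow> (nat \<Rightarrow> nat \<Rightarrow> bool) \<Rightarrow> (nat \<Rightarrow> 'a::linorder) \<Rightarrow> bool" where
  "nested n R key \<longleftrightarrow> inj_on key {1..n} \<and>
     (\<forall>i\<in>{1..n}. \<forall>i'\<in>{1..n}. \<forall>j\<in>{1..n}. R i j \<and> key i' \<le> key i \<longrightarrow> R i' j) \<and>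
     (\<forall>i\<in>{1..n}. \<forall>j\<in>{1..n}. \<forall>j'\<in>{1..n}. R i j \<and> key j \<le> key j' \<longrightarrow> R i j')"

lemma down_degs_eq_if_iso_on:
  assumes "iso_on n R S"
  shows "down_degs n R = down_degs n S"
proof -
  obtain f where f: "bij_betw f {1..n} {1..n}" "\<forall>i\<in>{1..n}. \<forall>j\<in>{1..n}. R i j \<longleftrightarrow> S (f i) (f j)"
    using assms by (auto simp: iso_on_def)
  have inj: "inj_on f {1..n}" and img: "f ` {1..n} = {1..n}" using f(1) by (auto simp: bij_betw_def)
  have "down_deg n R j = down_deg n S (f j)" if j: "j \<in> {1..n}" for j
  proof -
    have "f ` {i\<in>{1..n}. R i j} = {i'\<in>{1..n}. S i' (f j)}"
    proof
      show "f ` {i\<in>{1..n}. R i j} \<subseteq> {i'\<in>{1..n}. S i' (f j)}"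
      proof
        fix i' assume "i' \<in> f ` {i\<in>{1..n}. R i j}"
        then obtain i where "i \<in> {1..n}" "R i j" "i' = f i" by blast
        then show "i' \<in> {i'\<in>{1..n}. S i' (f j)}" using f(2) j img by auto
      qed
      show "{i'\<in>{1..n}. S i' (f j)} \<subseteq> f ` {i\<in>{1..n}. R i j}"
      proof
        fix i' assume i': "i' \<in> {i'\<in>{1..n}. S i' (f j)}"
        then obtain i where "i \<in> {1..n}" "i' = f i" using img by (metis imageE mem_Collect_eq)
        then show "i' \<in> f ` {i\<in>{1..n}. R i j}" using i' f(2) j by blast
      qed
    qed
    moreover have "inj_on f {i\<in>{1..n}. R i j}" by (rule inj_on_subset[OF inj]) blast
    ultimately show ?thesis unfolding down_deg_def by (metis card_image)
  qed
  then have "down_degs n R = image_mset (down_deg n S \<circ> f) (mset_set {1..n})"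
    unfolding down_degs_def by (intro image_mset_cong) auto
  also have "\<dots> = image_mset (down_deg n S) (image_mset f (mset_set {1..n}))"
    by (simp add: image_mset.compositionality)
  also have "image_mset f (mset_set {1..n}) = mset_set {1..n}"
    using image_mset_mset_set[OF inj] img by simp
  finally show ?thesis by (simp add: down_degs_def)
qed

definition key_rank :: "'b set \<Rightarrow> ('b \<Rightarrow> 'a::linorder) \<Rightarrow> 'b \<Rightarrow> nat" where
  "key_rank S key i = card {i'\<in>S. key i' \<le> key i}"

lemma key_rank_strict_mono:
  assumes "finite S" "j \<in> S" "key i < key j"
  shows "key_rank S key i < key_rank S key j"
proof -
  have "{i'\<in>S. key i' \<le> key i} \<subseteq> {i'\<in>S. key i' \<le> key j}"
    using assms(3) by auto
  moreover have "j \<in> {i'\<in>S. key i' \<le> key j}" "j \<notin> {i'\<in>S. key i' \<le> key i}"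
    using assms(2,3) by auto
  ultimately have "{i'\<in>S. key i' \<le> key i} \<subset> {i'\<in>S. key i' \<le> key j}" by blast
  then show ?thesis unfolding key_rank_def using assms(1) by (simp add: psubset_card_mono)
qed

lemma key_rank_eq_Suc_card_less:
  assumes "finite S" "inj_on key S" "i \<in> S"
  shows "key_rank S key i = Suc (card {i'\<in>S. key i' < key i})"
proof -
  have "{i'\<in>S. key i' \<le> key i} = insert i {i'\<in>S. key i' < key i}"
    using assms(2,3) by (auto simp: order.order_iff_strict dest: inj_onD)
  then show ?thesis using assms(1) by (simp add: key_rank_def)
qed

lemma bij_betw_key_rank:
  assumes "finite S" "inj_on key S"
  shows "bij_betw (key_rank S key) S {1..card S}"
proof -
  have rank_in: "key_rank S key i \<in> {1..card S}" if "i \<in> S" for i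
    using key_rank_eq_Suc_card_less[OF assms that]
      card_mono[OF assms(1), of "{i'\<in>S. key i' \<le> key i}"]
    by (auto simp: key_rank_def)
  have inj: "inj_on (key_rank S key) S"
  proof (rule inj_onI)
    fix i j assume ij: "i \<in> S" "j \<in> S" "key_rank S key i = key_rank S key j"
    show "i = j"
    proof (rule ccontr)
      assume "i \<noteq> j"
      then have "key i \<noteq> key j" using assms(2) ij by (meson inj_on_def)
      then show False
        using key_rank_strict_mono[OF assms(1), of i key j]
          key_rank_strict_mono[OF assms(1), of j key i] ij
        by (cases "key i" "key j" rule: linorder_cases) auto
    qed
  qed
  moreover have "key_rank S key ` S = {1..card S}"
  proof (rule card_subset_eq)
    show "key_rank S key ` S \<subseteq> {1..card S}" using rank_in by blast
    show "card (key_rank S key ` S) = card {1..card S}" using card_image[OF inj] by simp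
  qed simp
  ultimately show ?thesis by (simp add: bij_betw_def)
qed

lemma nested_iff_key_rank_le:
  assumes nes: "nested n R key" and i: "i \<in> {1..n}" and j: "j \<in> {1..n}"
  shows "R i j \<longleftrightarrow> key_rank {1..n} key i \<le> down_deg n R j"
proof
  assume "R i j"
  then have "R i' j" if "i' \<in> {1..n}" "key i' \<le> key i" for i'
    using nes i j that unfolding nested_def by blast
  then have "{i'\<in>{1..n}. key i' \<le> key i} \<subseteq> {i\<in>{1..n}. R i j}" by blast
  then show "key_rank {1..n} key i \<le> down_deg n R j"
    unfolding key_rank_def down_deg_def by (rule card_mono[rotated]) simp
next
  assume le: "key_rank {1..n} key i \<le> down_deg n R j"
  show "R i j"
  proof (rule ccontr)
    assume "\<not> R i j"
    then have "key i' < key i" if "i' \<in> {1..n}" "R i' j" for i'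
      using nes i j that unfolding nested_def by (meson not_le)
    then have "{i\<in>{1..n}. R i j} \<subseteq> {i'\<in>{1..n}. key i' < key i}" by blast
    then have "down_deg n R j \<le> card {i'\<in>{1..n}. key i' < key i}"
      unfolding down_deg_def by (rule card_mono[rotated]) simp
    with le key_rank_eq_Suc_card_less[of "{1..n}" key i] nes i show False
      by (simp add: nested_def)
  qed
qed

lemma nested_down_deg_mono:
  assumes "nested n R key" "j \<in> {1..n}" "j' \<in> {1..n}" "key j \<le> key j'"
  shows "down_deg n R j \<le> down_deg n R j'"
proof -
  have "{i\<in>{1..n}. R i j} \<subseteq> {i\<in>{1..n}. R i j'}"
    using assms unfolding nested_def by blast
  then show ?thesis unfolding down_deg_def by (rule card_mono[rotated]) simp
qed

text \<open>Ranking the elements by \<open>key\<close> turns a nested relation into \<open>p \<le> c q\<close> for a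
  monotone \<open>c\<close>, whose values are the down-degrees.\<close>

lemma nested_canonical_form:
  assumes nes: "nested n R key"
  obtains \<sigma> c where "bij_betw \<sigma> {1..n} {1..n}"
    "\<forall>i\<in>{1..n}. \<forall>j\<in>{1..n}. R i j \<longleftrightarrow> \<sigma> i \<le> c (\<sigma> j)"
    "\<forall>p\<in>{1..n}. \<forall>q\<in>{1..n}. p \<le> q \<longrightarrow> c p \<le> c q"
    "down_degs n R = image_mset c (mset_set {1..n})"
proof
  let ?S = "{1..n}" and ?\<sigma> = "key_rank {1..n} key"
  define c where "c p = down_deg n R (inv_into ?S ?\<sigma> p)" for p
  have bij: "bij_betw ?\<sigma> ?S ?S" using bij_betw_key_rank[of ?S key] nes by (simp add: nested_def)
  then have inj: "inj_on ?\<sigma> ?S" and img: "?\<sigma> ` ?S = ?S" by (auto simp: bij_betw_def)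
  have c\<sigma>: "c (?\<sigma> j) = down_deg n R j" if "j \<in> ?S" for j
    using inv_into_f_f[OF inj that] by (simp add: c_def)
  show "bij_betw ?\<sigma> ?S ?S" by (rule bij)
  show "\<forall>i\<in>?S. \<forall>j\<in>?S. R i j \<longleftrightarrow> ?\<sigma> i \<le> c (?\<sigma> j)"
    using nested_iff_key_rank_le[OF nes] c\<sigma> by simp
  show "\<forall>p\<in>?S. \<forall>q\<in>?S. p \<le> q \<longrightarrow> c p \<le> c q"
  proof (intro ballI impI)
    fix p q assume "p \<in> ?S" "q \<in> ?S" "p \<le> q"
    then obtain jp jq where j: "jp \<in> ?S" "jq \<in> ?S" "p = ?\<sigma> jp" "q = ?\<sigma> jq" "?\<sigma> jp \<le> ?\<sigma> jq"
      using img by (metis imageE)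
    then have "key jp \<le> key jq" using key_rank_strict_mono[of ?S jp key jq] by force
    then show "c p \<le> c q" using nested_down_deg_mono[OF nes] j c\<sigma> by simp
  qed
  have "down_degs n R = image_mset (c \<circ> ?\<sigma>) (mset_set ?S)"
    unfolding down_degs_def using c\<sigma> by (intro image_mset_cong) auto
  also have "\<dots> = image_mset c (image_mset ?\<sigma> (mset_set ?S))"
    by (simp add: image_mset.compositionality)
  also have "image_mset ?\<sigma> (mset_set ?S) = mset_set ?S"
    using image_mset_mset_set[OF inj] img by simp
  finally show "down_degs n R = image_mset c (mset_set ?S)" .
qed

lemma image_mset_eq_if_mono:
  fixes c1 c2 :: "nat \<Rightarrow> 'a::linorder"
  assumes "image_mset c1 (mset_set {1..n}) = image_mset c2 (mset_set {1..n})"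
    "\<forall>p\<in>{1..n}. \<forall>q\<in>{1..n}. p \<le> q \<longrightarrow> c1 p \<le> c1 q"
    "\<forall>p\<in>{1..n}. \<forall>q\<in>{1..n}. p \<le> q \<longrightarrow> c2 p \<le> c2 q"
  shows "\<forall>p\<in>{1..n}. c1 p = c2 p"
proof -
  let ?L = "[1..<Suc n]"
  have set_L: "set ?L = {1..n}" by auto
  have "mset_set {1..n} = mset ?L" by (metis mset_upt atLeastLessThanSuc_atLeastAtMost)
  then have ms: "mset (map c1 ?L) = mset (map c2 ?L)" using assms(1) by simp
  have sorted: "sorted (map c ?L)" if "\<forall>p\<in>{1..n}. \<forall>q\<in>{1..n}. p \<le> q \<longrightarrow> c p \<le> c q" for c :: "nat \<Rightarrow> 'a"
    unfolding sorted_map by (rule sorted_wrt_mono_rel[OF _ sorted_wrt_upt]) (use that set_L in auto)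
  have "map c1 ?L = map c2 ?L"
    using properties_for_sort[OF ms sorted[OF assms(2)]] sorted_sort_id[OF sorted[OF assms(3)]]
    by simp
  then have "\<forall>p\<in>set ?L. c1 p = c2 p" by (simp only: map_eq_conv)
  then show ?thesis unfolding set_L .
qed

theorem nested_iso_on_if_down_degs_eq:
  fixes k1 :: "nat \<Rightarrow> 'a::linorder" and k2 :: "nat \<Rightarrow> 'b::linorder"
  assumes "nested n R k1" "nested n S k2" "down_degs n R = down_degs n S"
  shows "iso_on n R S"
proof -
  obtain \<sigma>1 c1 where 1: "bij_betw \<sigma>1 {1..n} {1..n}" "\<forall>i\<in>{1..n}. \<forall>j\<in>{1..n}. R i j \<longleftrightarrow> \<sigma>1 i \<le> c1 (\<sigma>1 j)"
     "\<forall>p\<in>{1..n}. \<forall>q\<in>{1..n}. p \<le> q \<longrightarrow> c1 p \<le> c1 q" "down_degs n R = image_mset c1 (mset_set {1..n})"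
    by (rule nested_canonical_form[OF assms(1)])
  obtain \<sigma>2 c2 where 2: "bij_betw \<sigma>2 {1..n} {1..n}" "\<forall>i\<in>{1..n}. \<forall>j\<in>{1..n}. S i j \<longleftrightarrow> \<sigma>2 i \<le> c2 (\<sigma>2 j)"
     "\<forall>p\<in>{1..n}. \<forall>q\<in>{1..n}. p \<le> q \<longrightarrow> c2 p \<le> c2 q" "down_degs n S = image_mset c2 (mset_set {1..n})"
    by (rule nested_canonical_form[OF assms(2)])
  have c: "\<forall>p\<in>{1..n}. c1 p = c2 p"
    using image_mset_eq_if_mono[OF _ 1(3) 2(3)] 1(4) 2(4) assms(3) by simp
  define f where "f = inv_into {1..n} \<sigma>2 \<circ> \<sigma>1"
  have f: "bij_betw f {1..n} {1..n}" unfolding f_def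
    by (rule bij_betw_trans[OF 1(1) bij_betw_inv_into[OF 2(1)]])
  have \<sigma>2f: "\<sigma>2 (f i) = \<sigma>1 i" if "i \<in> {1..n}" for i
  proof -
    have "\<sigma>1 i \<in> \<sigma>2 ` {1..n}" using 1(1) 2(1) that by (metis bij_betwE bij_betw_imp_surj_on)
    then show ?thesis unfolding f_def by (simp add: f_inv_into_f)
  qed
  show ?thesis unfolding iso_on_def
  proof (intro exI[of _ f] conjI ballI)
    fix i j assume i: "i \<in> {1..n}" and j: "j \<in> {1..n}"
    have "R i j \<longleftrightarrow> \<sigma>1 i \<le> c1 (\<sigma>1 j)" using 1(2) i j by blast
    also have "\<dots> \<longleftrightarrow> \<sigma>2 (f i) \<le> c2 (\<sigma>2 (f j))"
      using \<sigma>2f[OF i] \<sigma>2f[OF j] c 1(1) j by (metis bij_betwE)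
    also have "\<dots> \<longleftrightarrow> S (f i) (f j)" using 2(2) f i j by (meson bij_betwE)
    finally show "R i j \<longleftrightarrow> S (f i) (f j)" .
  qed (rule f)
qed

section \<open>Unit interval orders and their Dyck paths\<close>

lemma Pw_Suc_Suc: "Pw w (Suc i) (Suc j) \<longleftrightarrow> area_prec w i j"
  unfolding Pw_def area_prec_def by auto

lemma down_degs_Pw: "down_degs (length w) (Pw w) = area_down_degs w"
proof -
  let ?n = "length w"
  have "{i\<in>{1..?n}. Pw w i (Suc j)} = Suc ` {i. area_prec w i j}" for j
  proof (intro equalityI subsetI)
    fix x assume x: "x \<in> {i\<in>{1..?n}. Pw w i (Suc j)}"
    then have "x = Suc (x - 1)" by auto
    then show "x \<in> Suc ` {i. area_prec w i j}"
      using x Pw_Suc_Suc[of w "x - 1" j] by (metis imageI mem_Collect_eq)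
  qed (auto simp: Pw_Suc_Suc area_prec_def)
  then have "down_deg ?n (Pw w) (Suc j) = area_down_deg w j" for j
    unfolding down_deg_def area_down_deg_def by (simp add: card_image)
  moreover have "mset_set {1..?n} = image_mset Suc (mset_set {..<?n})"
    using image_mset_mset_set[of Suc "{..<?n}"] image_Suc_lessThan by simp
  ultimately show ?thesis
    unfolding down_degs_def area_down_degs_def by (simp add: image_mset.compositionality comp_def)
qed

lemma nested_Pw: "nested (length w) (Pw w) (\<lambda>i. (w ! (i - 1), i))"
  unfolding nested_def
proof (intro conjI ballI impI)
  show "inj_on (\<lambda>i. (w ! (i - 1), i)) {1..length w}" by (auto simp: inj_on_def)
qed (auto simp: Pw_def less_eq_prod_def)

lemma nested_uio:
  assumes "\<forall>i j. 1 \<le> i \<longrightarrow> i \<le> j \<longrightarrow> j \<le> n \<longrightarrow> x i \<le> x j"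
  shows "nested n (uio x n) (\<lambda>i. i)"
  unfolding nested_def
proof (intro conjI ballI impI)
  show "inj_on (\<lambda>i. i) {1..n}" by (simp add: inj_on_def)
next
  fix i i' j assume a: "i \<in> {1..n}" "i' \<in> {1..n}" "j \<in> {1..n}" "uio x n i j \<and> i' \<le> i"
  then have "x i' \<le> x i" using assms by simp
  with a show "uio x n i' j" by (auto simp: uio_def)
next
  fix i j j' assume a: "i \<in> {1..n}" "j \<in> {1..n}" "j' \<in> {1..n}" "uio x n i j \<and> j \<le> j'"
  then have "x j \<le> x j'" using assms by simp
  with a show "uio x n i j'" by (auto simp: uio_def)
qed

text \<open>No interval lies to the right of the last one, so adding it leaves the old down-degrees
  unchanged.\<close>

lemma down_deg_uio_Suc:
  assumes x: "\<forall>i j. 1 \<le> i \<longrightarrow> i \<le> j \<longrightarrow> j \<le> Suc n \<longrightarrow> x i \<le> x j" and j: "j \<in> {1..n}"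
  shows "down_deg (Suc n) (uio x (Suc n)) j = down_deg n (uio x n) j"
proof -
  have "{i\<in>{1..Suc n}. uio x (Suc n) i j} = {i\<in>{1..n}. uio x n i j}"
  proof (intro equalityI subsetI)
    fix i assume i: "i \<in> {i\<in>{1..Suc n}. uio x (Suc n) i j}"
    have "x j \<le> x (Suc n)" using x j by simp
    then have "i \<noteq> Suc n" using i by (auto simp: uio_def)
    then show "i \<in> {i\<in>{1..n}. uio x n i j}" using i j by (auto simp: uio_def)
  qed (use j in \<open>auto simp: uio_def\<close>)
  then show ?thesis by (simp only: down_deg_def)
qed

lemma down_degs_uio_Suc:
  assumes x: "\<forall>i j. 1 \<le> i \<longrightarrow> i \<le> j \<longrightarrow> j \<le> Suc n \<longrightarrow> x i \<le> x j"
  defines "t \<equiv> down_deg (Suc n) (uio x (Suc n)) (Suc n)"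
  shows "down_degs (Suc n) (uio x (Suc n)) = add_mset t (down_degs n (uio x n))"
    and "t \<le> n" and "\<forall>y\<in>#down_degs n (uio x n). y \<le> t"
proof -
  have "image_mset (down_deg (Suc n) (uio x (Suc n))) (mset_set {1..n}) = down_degs n (uio x n)"
    unfolding down_degs_def
  proof (rule image_mset_cong)
    fix j assume "j \<in># mset_set {1..n}"
    then have "j \<in> {1..n}" by simp
    then show "down_deg (Suc n) (uio x (Suc n)) j = down_deg n (uio x n) j"
      using down_deg_uio_Suc[OF x] by simp
  qed
  moreover have "mset_set {1..Suc n} = add_mset (Suc n) (mset_set {1..n})"
    by (simp add: atLeastAtMostSuc_conv)
  ultimately show "down_degs (Suc n) (uio x (Suc n)) = add_mset t (down_degs n (uio x n))"
    unfolding down_degs_def t_def by simp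
  have "{i\<in>{1..Suc n}. uio x (Suc n) i (Suc n)} \<subseteq> {1..n}"
  proof
    fix i assume "i \<in> {i\<in>{1..Suc n}. uio x (Suc n) i (Suc n)}"
    then show "i \<in> {1..n}" by (cases "i = Suc n") (auto simp: uio_def)
  qed
  then show "t \<le> n" unfolding t_def down_deg_def using card_mono[of "{1..n}"] by fastforce
  show "\<forall>y\<in>#down_degs n (uio x n). y \<le> t"
  proof
    fix y assume "y \<in># down_degs n (uio x n)"
    then obtain j where j: "j \<in> {1..n}" "y = down_deg n (uio x n) j" by (auto simp: down_degs_def)
    have "{i\<in>{1..n}. uio x n i j} \<subseteq> {i\<in>{1..Suc n}. uio x (Suc n) i (Suc n)}"
    proof
      fix i assume i: "i \<in> {i\<in>{1..n}. uio x n i j}"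
      have "x j \<le> x (Suc n)" using x j by simp
      then show "i \<in> {i\<in>{1..Suc n}. uio x (Suc n) i (Suc n)}" using i by (auto simp: uio_def)
    qed
    then show "y \<le> t" unfolding j(2) t_def down_deg_def by (rule card_mono[rotated]) simp
  qed
qed

lemma iso_on_Pw_uio_iff_down_degs_eq:
  assumes "dyck n d" "\<forall>i j. 1 \<le> i \<longrightarrow> i \<le> j \<longrightarrow> j \<le> n \<longrightarrow> x i \<le> x j"
  shows "iso_on n (Pw (area d)) (uio x n) \<longleftrightarrow> area_down_degs (area d) = down_degs n (uio x n)"
  using down_degs_eq_if_iso_on nested_iso_on_if_down_degs_eq[OF _ nested_uio[OF assms(2)]]
    nested_Pw[of "area d"] down_degs_Pw[of "area d"] length_area_dyck[OF assms(1)]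
  by metis

lemma dyck_add_interval:
  assumes dy: "dyck n e" and iso: "iso_on n (Pw (area e)) (uio x n)"
    and x: "\<forall>i j. 1 \<le> i \<longrightarrow> i \<le> j \<longrightarrow> j \<le> Suc n \<longrightarrow> x i \<le> x j"
  obtains p where "p \<le> length e" "dyck (Suc n) (insert_peak p e)"
    "iso_on (Suc n) (Pw (area (insert_peak p e))) (uio x (Suc n))"
    "is_final_max_peak (insert_peak p e) p"
proof -
  have x_n: "\<forall>i j. 1 \<le> i \<longrightarrow> i \<le> j \<longrightarrow> j \<le> n \<longrightarrow> x i \<le> x j" using x by simp
  define r where "r = area e"
  have lr: "length r = n" using length_area_dyck[OF dy] by (simp add: r_def)
  define t where "t = down_deg (Suc n) (uio x (Suc n)) (Suc n)"
  have degs: "area_down_degs r = down_degs n (uio x n)"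
    using iso_on_Pw_uio_iff_down_degs_eq[OF dy x_n] iso by (simp add: r_def)
  have "\<forall>j<length r. area_down_deg r j \<le> t"
  proof (intro allI impI)
    fix j assume "j < length r"
    then have "area_down_deg r j \<in># area_down_degs r" by (simp add: area_down_degs_def)
    then show "area_down_deg r j \<le> t" using degs down_degs_uio_Suc(3)[OF x] by (simp add: t_def)
  qed
  then obtain k h where slot: "final_peak_slot r k h" and deg: "slot_down_deg r h k = t"
    using final_peak_slot_exists down_degs_uio_Suc(2)[OF x] lr t_def by metis
  obtain p where p: "p \<le> length e" "cntA (take p e) = k" "nat (diag_level e p) = h"
    using final_peak_slot_point_exists[OF dy] slot r_def by blast
  have dy': "dyck (Suc n) (insert_peak p e)" using dy p(1) by (simp add: dyck_insert_peak_iff)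
  have "area_down_degs (area (insert_peak p e)) = add_mset t (area_down_degs r)"
    using area_insert_peak[of p e] p area_down_degs_insert_at[of k r h] slot deg
    by (simp add: r_def final_peak_slot_def)
  then have "iso_on (Suc n) (Pw (area (insert_peak p e))) (uio x (Suc n))"
    using iso_on_Pw_uio_iff_down_degs_eq[OF dy' x] degs down_degs_uio_Suc(1)[OF x]
    by (simp add: t_def)
  moreover have "is_final_max_peak (insert_peak p e) p"
    using is_final_max_peak_insert_peak[OF dy p(1)] slot p by (simp add: r_def)
  ultimately show ?thesis using that p(1) dy' by blast
qed

lemma ex_dyck_iso_uio:
  "\<forall>i j. 1 \<le> i \<longrightarrow> i \<le> j \<longrightarrow> j \<le> n \<longrightarrow> x i \<le> x j \<Longrightarrow>
   \<exists>d. dyck n d \<and> iso_on n (Pw (area d)) (uio x n)"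
proof (induction n)
  case 0
  have "dyck 0 []" by (simp add: dyck_def)
  moreover have "iso_on 0 (Pw (area [])) (uio x 0)"
    unfolding iso_on_def by (intro exI[of _ id]) auto
  ultimately show ?case by blast
next
  case (Suc n)
  then obtain e where "dyck n e" "iso_on n (Pw (area e)) (uio x n)" by auto
  with dyck_add_interval[of n e x] Suc.prems show ?case by metis
qed

text \<open>Removing the final maximal peak removes an element of largest down-degree, and by
  \<open>final_peak_slot_unique\<close> that degree determines where the peak sat; so by induction the
  multiset of down-degrees determines the path.\<close>

lemma dyck_eq_if_area_down_degs_eq:
  "dyck n d1 \<Longrightarrow> dyck n d2 \<Longrightarrow> area_down_degs (area d1) = area_down_degs (area d2) \<Longrightarrow> d1 = d2"
proof (induction n arbitrary: d1 d2)
  case 0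
  then show ?case using length_dyck[of 0 d1] length_dyck[of 0 d2] by simp
next
  case (Suc n)
  obtain p1 e1 where e1: "p1 \<le> length e1" "dyck n e1" "d1 = insert_peak p1 e1"
    and slot1: "final_peak_slot (area e1) (cntA (take p1 e1)) (nat (diag_level e1 p1))"
    by (rule dyck_remove_final_max_peak[OF Suc.prems(1)])
  obtain p2 e2 where e2: "p2 \<le> length e2" "dyck n e2" "d2 = insert_peak p2 e2"
    and slot2: "final_peak_slot (area e2) (cntA (take p2 e2)) (nat (diag_level e2 p2))"
    by (rule dyck_remove_final_max_peak[OF Suc.prems(2)])
  let ?k1 = "cntA (take p1 e1)" and ?h1 = "nat (diag_level e1 p1)"
  let ?k2 = "cntA (take p2 e2)" and ?h2 = "nat (diag_level e2 p2)"
  have "area_down_degs (area d1) =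
      add_mset (slot_down_deg (area e1) ?h1 ?k1) (area_down_degs (area e1))"
    using area_down_degs_insert_at slot1 e1(3) area_insert_peak by (simp add: final_peak_slot_def)
  moreover have "area_down_degs (area d2) =
      add_mset (slot_down_deg (area e2) ?h2 ?k2) (area_down_degs (area e2))"
    using area_down_degs_insert_at slot2 e2(3) area_insert_peak by (simp add: final_peak_slot_def)
  ultimately have "slot_down_deg (area e1) ?h1 ?k1 = slot_down_deg (area e2) ?h2 ?k2"
    and "area_down_degs (area e1) = area_down_degs (area e2)"
    using add_mset_eq_max_elem[of _ "area_down_degs (area e1)" _ "area_down_degs (area e2)"]
      area_down_degs_le_slot_down_deg[OF slot1] area_down_degs_le_slot_down_deg[OF slot2]
      Suc.prems(3)
    by metis+
  moreover from this(2) have "e1 = e2" using Suc.IH e1(2) e2(2) by blast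
  ultimately have "?k1 = ?k2 \<and> ?h1 = ?h2"
    using final_peak_slot_unique slot1 slot2 by metis
  then have "area d1 = area d2" using e1(3) e2(3) \<open>e1 = e2\<close> by (simp add: area_insert_peak)
  then show ?case by (rule dyck_eq_if_area_eq[OF Suc.prems(1,2)])
qed

lemma pU_eqI:
  assumes "dyck n e" "iso_on n (Pw (area e)) U"
  shows "pU n U = e"
  unfolding pU_def
proof (rule the_equality)
  show "dyck n e \<and> iso_on n (Pw (area e)) U" using assms by simp
  fix d assume d: "dyck n d \<and> iso_on n (Pw (area d)) U"
  then have "down_degs n (Pw (area d)) = down_degs n (Pw (area e))"
    using down_degs_eq_if_iso_on assms(2) by metis
  then have "area_down_degs (area d) = area_down_degs (area e)"
    using down_degs_Pw length_area_dyck assms(1) d by metis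
  then show "d = e" using dyck_eq_if_area_down_degs_eq d assms(1) by blast
qed

theorem mainTheorem7:
  fixes n :: nat and x :: "nat \<Rightarrow> real"
  assumes "\<forall>i j. 1 \<le> i \<longrightarrow> i \<le> j \<longrightarrow> j \<le> Suc n \<longrightarrow> x i \<le> x j"
  shows "add_final_max_peak (pU n (uio x n)) (pU (Suc n) (uio x (Suc n)))"
proof -
  obtain e where e: "dyck n e" "iso_on n (Pw (area e)) (uio x n)"
    using ex_dyck_iso_uio[of n x] assms by auto
  obtain p where p: "p \<le> length e" "dyck (Suc n) (insert_peak p e)"
    "iso_on (Suc n) (Pw (area (insert_peak p e))) (uio x (Suc n))"
    "is_final_max_peak (insert_peak p e) p"
    by (rule dyck_add_interval[OF e assms])
  have "pU n (uio x n) = take p e @ drop p e" using pU_eqI[OF e] by simp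
  moreover have "pU (Suc n) (uio x (Suc n)) = take p e @ [A, B] @ drop p e"
    using pU_eqI[OF p(2,3)] by (simp add: insert_peak_def)
  ultimately show ?thesis
    using p(1,4) unfolding add_final_max_peak_def insert_peak_def by (metis length_take min_absorb2)
qed

end
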